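(* There exists a tight code $\mathcal{C}$ of $39$ points in $\mathbb{O}\mathbb{P}^2$ consisting of $13$ orthogonal triples such that, for any two points in distinct triples, the chordal distance is $\sqrt{2/3}$. Equivalently, if $\Pi,\Pi'$ are the projection matrices of two distinct points of $\mathcal{C}$, then $\langle \Pi,\Pi'\rangle = 0$ if the two points lie in the same triple and $\langle\Pi,\Pi'\rangle = 1/3$ otherwise.
   Context: $\mathbb{O}\mathbb{P}^2$ is the set of $3\times3$ octonionic Hermitian matrices $\Pi$ with $\Pi^2=\Pi$ and $\operatorname{Tr}\Pi=1$, with inner product $\langle A,B\rangle=\operatorname{Re}\operatorname{Tr}(AB)$ and chordal distance $\rho(\Pi_1,\Pi_2)=\sqrt{1-\langle\Pi_1,\Pi_2\rangle}$. The geodesic distance $\vartheta$ (normalized to have maximum $\pi$) satisfies $\cos\vartheta(\Pi_1,\Pi_2) = 2\langle \Pi_1,\Pi_2\rangle - 1$. A code is a finite subset. Let $C_k(z)=P_k^{(7,3)}(z)$ be the Jacobi polynomials (the zonal spherical functions of $\mathbb{O}\mathbb{P}^2$), normalized so $C_0=1$. A code $\mathcal{C}$ with minimal geodesic distance $\theta$ is tight if there is a polynomial $f(z)=\sum_{k=0}^n f_k C_k(z)$ with $f_0>0$, $f_k\ge 0$ for $1\le k\le n$, $f(z)\le 0$ for $-1\le z\le\cos\theta$, and $|\mathcal{C}| = f(1)/f_0$ (i.e., the linear programming bound is attained exactly). *)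

theory Defs
  imports Complex_Main
begin

text \<open>Quaternions as pairs of complex numbers, octonions as pairs of quaternions,
  with the Cayley--Dickson product (a,b)(c,d) = (ac - d^* b, d a + b c^*)
  and conjugation (a,b)^* = (a^*, -b).\<close>

type_synonym quat = "complex \<times> complex"
type_synonym oct = "quat \<times> quat"

definition qadd :: "quat \<Rightarrow> quat \<Rightarrow> quat" where
  "qadd x y = (fst x + fst y, snd x + snd y)"
definition qneg :: "quat \<Rightarrow> quat" where
  "qneg x = (- fst x, - snd x)"
definition qconj :: "quat \<Rightarrow> quat" where
  "qconj x = (cnj (fst x), - snd x)"
definition qmul :: "quat \<Rightarrow> quat \<Rightarrow> quat" where
  "qmul x y = (fst x * fst y - cnj (snd y) * snd x, snd y * fst x + snd x * cnj (fst y))"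

definition oadd :: "oct \<Rightarrow> oct \<Rightarrow> oct" where
  "oadd x y = (qadd (fst x) (fst y), qadd (snd x) (snd y))"
definition oconj :: "oct \<Rightarrow> oct" where
  "oconj x = (qconj (fst x), qneg (snd x))"
definition omul :: "oct \<Rightarrow> oct \<Rightarrow> oct" where
  "omul x y = (qadd (qmul (fst x) (fst y)) (qneg (qmul (qconj (snd y)) (snd x))),
               qadd (qmul (snd y) (fst x)) (qmul (snd x) (qconj (fst y))))"
definition ozero :: oct where "ozero = ((0,0),(0,0))"
definition oone :: oct where "oone = ((1,0),(0,0))"
definition ore :: "oct \<Rightarrow> real" where "ore x = Re (fst (fst x))"

text \<open>A 3x3 octonionic matrix is a function on indices; entries outside {0,1,2}
  are required to be zero for points of OP^2 so that distinct points are distinct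
  functions.\<close>

type_synonym omat = "nat \<Rightarrow> nat \<Rightarrow> oct"

definition omat_mult :: "omat \<Rightarrow> omat \<Rightarrow> omat" where
  "omat_mult A B = (\<lambda>i j. if i < 3 \<and> j < 3 then
     oadd (omul (A i 0) (B 0 j)) (oadd (omul (A i 1) (B 1 j)) (omul (A i 2) (B 2 j)))
     else ozero)"

definition otrace :: "omat \<Rightarrow> oct" where
  "otrace A = oadd (A 0 0) (oadd (A 1 1) (A 2 2))"

definition hermitian3 :: "omat \<Rightarrow> bool" where
  "hermitian3 A \<longleftrightarrow> (\<forall>i<3. \<forall>j<3. A j i = oconj (A i j))
                    \<and> (\<forall>i j. \<not>(i < 3 \<and> j < 3) \<longrightarrow> A i j = ozero)"

definition OP2 :: "omat set" where
  "OP2 = {P. hermitian3 P \<and> omat_mult P P = P \<and> otrace P = oone}"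

definition oinner :: "omat \<Rightarrow> omat \<Rightarrow> real" where
  "oinner A B = ore (otrace (omat_mult A B))"

definition chordal :: "omat \<Rightarrow> omat \<Rightarrow> real" where
  "chordal P Q = sqrt (1 - oinner P Q)"

definition geod :: "omat \<Rightarrow> omat \<Rightarrow> real" where
  "geod P Q = arccos (2 * oinner P Q - 1)"

definition min_geod :: "omat set \<Rightarrow> real" where
  "min_geod C = Min {geod P Q | P Q. P \<in> C \<and> Q \<in> C \<and> P \<noteq> Q}"

text \<open>Jacobi polynomial P_n^{(a,b)}(z) for natural parameters a, b
  (standard normalization, so P_0 = 1).\<close>
definition jacobiP :: "nat \<Rightarrow> nat \<Rightarrow> nat \<Rightarrow> real \<Rightarrow> real" where
  "jacobiP n a b z = (\<Sum>s\<le>n. real ((n + a) choose (n - s)) * real ((n + b) choose s)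
        * ((z - 1) / 2) ^ s * ((z + 1) / 2) ^ (n - s))"

definition zonalOP2 :: "nat \<Rightarrow> real \<Rightarrow> real" where
  "zonalOP2 k z = jacobiP k 7 3 z"

definition tight_code :: "omat set \<Rightarrow> bool" where
  "tight_code C \<longleftrightarrow> finite C \<and> C \<subseteq> OP2 \<and>
     (\<exists>(n::nat) (fc::nat \<Rightarrow> real).
        fc 0 > 0 \<and> (\<forall>k\<in>{1..n}. fc k \<ge> 0) \<and>
        (\<forall>z. -1 \<le> z \<and> z \<le> cos (min_geod C) \<longrightarrow> (\<Sum>k\<le>n. fc k * zonalOP2 k z) \<le> 0) \<and>
        real (card C) = (\<Sum>k\<le>n. fc k * zonalOP2 k 1) / fc 0)"

end

theory Submission
  imports Defs
begin

text \<open>Twelve of the triples consist of points (1/3) v v^* with v = (1, b, c) and b, c unit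
  octonions.  Since the octonions are alternative, (x y^*) y = |y|^2 x, so such a matrix is an
  idempotent of trace one, and the inner product of two of them is
  (3 + 2 (b\<cdot>b' + c\<cdot>c' + (b c^*)\<cdot>(b' c'^*))) / 9.  The last triple is the diagonal frame.  For an
  explicit choice of 36 half-integral pairs (b, c) the required inner products 0 and 1/3 are
  integer identities checked by evaluation.  All distinct points then have inner product at most
  1/3, i.e. cos \<theta> = -1/3, and the annihilator (z + 1)(z + 1/3), whose Jacobi coefficients are
  nonnegative, gives the linear programming bound 39.\<close>

definition oct_of :: "real \<Rightarrow> real \<Rightarrow> real \<Rightarrow> real \<Rightarrow> real \<Rightarrow> real \<Rightarrow> real \<Rightarrow> real \<Rightarrow> oct" where
  "oct_of a0 a1 a2 a3 a4 a5 a6 a7 = ((Complex a0 a1, Complex a2 a3), (Complex a4 a5, Complex a6 a7))"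

definition oscale :: "real \<Rightarrow> oct \<Rightarrow> oct" where
  "oscale r x = ((of_real r * fst (fst x), of_real r * snd (fst x)),
                 (of_real r * fst (snd x), of_real r * snd (snd x)))"

definition oct_dot :: "oct \<Rightarrow> oct \<Rightarrow> real" where
  "oct_dot x y = ore (omul x (oconj y))"

lemma oct_of_cases:
  obtains a0 a1 a2 a3 a4 a5 a6 a7 where "x = oct_of a0 a1 a2 a3 a4 a5 a6 a7"
proof -
  have "x = oct_of (Re (fst (fst x))) (Im (fst (fst x))) (Re (snd (fst x))) (Im (snd (fst x)))
              (Re (fst (snd x))) (Im (fst (snd x))) (Re (snd (snd x))) (Im (snd (snd x)))"
    by (simp add: oct_of_def)
  then show ?thesis
    using that by blast
qed

lemma oct_of_eq_iff:
  "oct_of a0 a1 a2 a3 a4 a5 a6 a7 = oct_of b0 b1 b2 b3 b4 b5 b6 b7 \<longleftrightarrow>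
     a0 = b0 \<and> a1 = b1 \<and> a2 = b2 \<and> a3 = b3 \<and> a4 = b4 \<and> a5 = b5 \<and> a6 = b6 \<and> a7 = b7"
  by (simp add: oct_of_def complex_eq_iff)

lemma omul_oct_of:
  "omul (oct_of a0 a1 a2 a3 a4 a5 a6 a7) (oct_of b0 b1 b2 b3 b4 b5 b6 b7) = oct_of
    (a0 * b0 - a1 * b1 - a2 * b2 - a3 * b3 - a4 * b4 - a5 * b5 - a6 * b6 - a7 * b7)
    (a0 * b1 + a1 * b0 + a2 * b3 - a3 * b2 + a4 * b5 - a5 * b4 - a6 * b7 + a7 * b6)
    (a0 * b2 - a1 * b3 + a2 * b0 + a3 * b1 + a4 * b6 + a5 * b7 - a6 * b4 - a7 * b5)
    (a0 * b3 + a1 * b2 - a2 * b1 + a3 * b0 + a4 * b7 - a5 * b6 + a6 * b5 - a7 * b4)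
    (a0 * b4 - a1 * b5 - a2 * b6 - a3 * b7 + a4 * b0 + a5 * b1 + a6 * b2 + a7 * b3)
    (a0 * b5 + a1 * b4 - a2 * b7 + a3 * b6 - a4 * b1 + a5 * b0 - a6 * b3 + a7 * b2)
    (a0 * b6 + a1 * b7 + a2 * b4 - a3 * b5 - a4 * b2 + a5 * b3 + a6 * b0 - a7 * b1)
    (a0 * b7 - a1 * b6 + a2 * b5 + a3 * b4 - a4 * b3 - a5 * b2 + a6 * b1 + a7 * b0)"
  by (simp add: oct_of_def omul_def qmul_def qadd_def qneg_def qconj_def complex_eq_iff algebra_simps)

lemma oconj_oct_of:
  "oconj (oct_of a0 a1 a2 a3 a4 a5 a6 a7) = oct_of a0 (-a1) (-a2) (-a3) (-a4) (-a5) (-a6) (-a7)"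
  by (simp add: oct_of_def oconj_def qconj_def qneg_def complex_eq_iff)

lemma oadd_oct_of:
  "oadd (oct_of a0 a1 a2 a3 a4 a5 a6 a7) (oct_of b0 b1 b2 b3 b4 b5 b6 b7) =
     oct_of (a0+b0) (a1+b1) (a2+b2) (a3+b3) (a4+b4) (a5+b5) (a6+b6) (a7+b7)"
  by (simp add: oct_of_def oadd_def qadd_def complex_eq_iff)

lemma oscale_oct_of:
  "oscale r (oct_of a0 a1 a2 a3 a4 a5 a6 a7) =
     oct_of (r*a0) (r*a1) (r*a2) (r*a3) (r*a4) (r*a5) (r*a6) (r*a7)"
  by (simp add: oct_of_def oscale_def complex_eq_iff)

lemma ore_oct_of: "ore (oct_of a0 a1 a2 a3 a4 a5 a6 a7) = a0"
  by (simp add: oct_of_def ore_def)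

lemma oct_dot_oct_of:
  "oct_dot (oct_of a0 a1 a2 a3 a4 a5 a6 a7) (oct_of b0 b1 b2 b3 b4 b5 b6 b7) =
     a0*b0 + a1*b1 + a2*b2 + a3*b3 + a4*b4 + a5*b5 + a6*b6 + a7*b7"
  by (simp add: oct_dot_def omul_oct_of oconj_oct_of ore_oct_of)

lemma oone_eq_oct_of: "oone = oct_of 1 0 0 0 0 0 0 0"
  by (simp add: oct_of_def oone_def complex_eq_iff)

lemma ozero_eq_oct_of: "ozero = oct_of 0 0 0 0 0 0 0 0"
  by (simp add: oct_of_def ozero_def complex_eq_iff)

lemmas oct_of_simps = omul_oct_of oconj_oct_of oadd_oct_of oscale_oct_of ore_oct_of
  oct_dot_oct_of oct_of_eq_iff oone_eq_oct_of ozero_eq_oct_of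

lemma omul_oone_left [simp]: "omul oone x = x"
  by (cases x rule: oct_of_cases) (simp add: oct_of_simps)

lemma omul_oone_right [simp]: "omul x oone = x"
  by (cases x rule: oct_of_cases) (simp add: oct_of_simps)

lemma oconj_oone [simp]: "oconj oone = oone"
  by (simp add: oct_of_simps)

lemma oconj_oconj [simp]: "oconj (oconj x) = x"
  by (cases x rule: oct_of_cases) (simp add: oct_of_simps)

lemma oconj_omul: "oconj (omul x y) = omul (oconj y) (oconj x)"
  by (cases x rule: oct_of_cases, cases y rule: oct_of_cases) (simp add: oct_of_simps algebra_simps)

lemma ore_oadd: "ore (oadd x y) = ore x + ore y"
  by (cases x rule: oct_of_cases, cases y rule: oct_of_cases) (simp add: oct_of_simps)

lemma ore_omul: "ore (omul x y) = oct_dot x (oconj y)"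
  by (simp add: oct_dot_def)

lemma ozero_simps [simp]:
  "omul ozero x = ozero" "omul x ozero = ozero" "oadd ozero x = x" "oadd x ozero = x"
  "ore ozero = 0" "oconj ozero = ozero"
  by (cases x rule: oct_of_cases; simp add: oct_of_simps)+

lemma oscale_one [simp]: "oscale 1 x = x"
  by (simp add: oscale_def)

lemma oconj_oscale: "oconj (oscale r x) = oscale r (oconj x)"
  by (cases x rule: oct_of_cases) (simp add: oct_of_simps)

lemma ore_oscale: "ore (oscale r x) = r * ore x"
  by (cases x rule: oct_of_cases) (simp add: oct_of_simps)

lemma oadd_oscale: "oadd (oscale r x) (oscale s x) = oscale (r + s) x"
  by (cases x rule: oct_of_cases) (simp add: oct_of_simps algebra_simps)

lemma omul_oscale: "omul (oscale r x) (oscale s y) = oscale (r * s) (omul x y)"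
  by (cases x rule: oct_of_cases, cases y rule: oct_of_cases) (simp add: oct_of_simps algebra_simps)

lemma oct_dot_oconj: "oct_dot (oconj x) (oconj y) = oct_dot x y"
  by (cases x rule: oct_of_cases, cases y rule: oct_of_cases) (simp add: oct_of_simps)

lemma ore_oone [simp]: "ore oone = 1"
  by (simp add: oct_of_simps)

lemma oct_dot_oone [simp]: "oct_dot oone oone = 1"
  by (simp add: oct_of_simps)

lemma oct_dot_omul_self: "oct_dot (omul x y) (omul x y) = oct_dot x x * oct_dot y y"
  by (cases x rule: oct_of_cases, cases y rule: oct_of_cases)
    (simp add: oct_of_simps algebra_simps)

lemma omul_oconj_self: "omul x (oconj x) = oscale (oct_dot x x) oone"
  by (cases x rule: oct_of_cases) (simp add: oct_of_simps algebra_simps)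

lemma omul_omul_oconj_right: "omul (omul x (oconj y)) y = oscale (oct_dot y y) x"
  by (cases x rule: oct_of_cases, cases y rule: oct_of_cases) (simp add: oct_of_simps algebra_simps)

lemma omul_oconj_omul_left: "omul (oconj y) (omul y x) = oscale (oct_dot y y) x"
  by (cases x rule: oct_of_cases, cases y rule: oct_of_cases) (simp add: oct_of_simps algebra_simps)

section \<open>Points of the octonionic projective plane\<close>

definition line_vec :: "oct \<Rightarrow> oct \<Rightarrow> nat \<Rightarrow> oct" where
  "line_vec b c k = (if k = 0 then oone else if k = 1 then b else c)"

definition line_proj :: "oct \<Rightarrow> oct \<Rightarrow> omat" where
  "line_proj b c = (\<lambda>i j. if i < 3 \<and> j < 3
     then oscale (1/3) (omul (line_vec b c i) (oconj (line_vec b c j))) else ozero)"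

definition coord_proj :: "nat \<Rightarrow> omat" where
  "coord_proj k = (\<lambda>i j. if i = k \<and> j = k then oone else ozero)"

lemma less_3_cases: "(i::nat) < 3 \<Longrightarrow> i = 0 \<or> i = 1 \<or> i = 2"
  by auto

lemma line_vec_omul_oconj_chain:
  assumes b: "oct_dot b b = 1" and c: "oct_dot c c = 1" and "i < 3" "j < 3" "k < 3"
  shows "omul (omul (line_vec b c i) (oconj (line_vec b c k))) (omul (line_vec b c k) (oconj (line_vec b c j)))
           = omul (line_vec b c i) (oconj (line_vec b c j))"
proof -
  have bc: "oct_dot (omul b (oconj c)) (omul b (oconj c)) = 1"
    and cb: "oct_dot (omul c (oconj b)) (omul c (oconj b)) = 1"
    using b c by (simp_all add: oct_dot_omul_self oct_dot_oconj)
  have "omul c (oconj b) = oconj (omul b (oconj c))"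
    by (simp add: oconj_omul)
  then have bcb: "omul (omul b (oconj c)) (omul c (oconj b)) = oone"
    using bc by (simp add: omul_oconj_self)
  have "omul c (oconj b) = oconj (omul b (oconj c))" "omul b (oconj c) = oconj (omul c (oconj b))"
    by (simp_all add: oconj_omul)
  then have cbc: "omul (omul c (oconj b)) (omul b (oconj c)) = oone"
    using cb by (simp add: omul_oconj_self)
  show ?thesis
    using less_3_cases[OF \<open>i < 3\<close>] less_3_cases[OF \<open>j < 3\<close>] less_3_cases[OF \<open>k < 3\<close>]
    by (auto simp: line_vec_def omul_omul_oconj_right omul_oconj_omul_left omul_oconj_self
        b c bcb cbc)
qed

lemma line_proj_in_OP2:
  assumes "oct_dot b b = 1" and "oct_dot c c = 1"
  shows "line_proj b c \<in> OP2"
proof -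
  have "hermitian3 (line_proj b c)"
    by (simp add: hermitian3_def line_proj_def oconj_oscale oconj_omul)
  moreover have "omat_mult (line_proj b c) (line_proj b c) = line_proj b c"
    by (auto simp: omat_mult_def line_proj_def omul_oscale oadd_oscale
        line_vec_omul_oconj_chain[OF assms] intro!: ext)
  moreover have "otrace (line_proj b c) = oone"
    by (simp add: otrace_def line_proj_def line_vec_def omul_oconj_self assms oadd_oscale)
  ultimately show ?thesis
    by (simp add: OP2_def)
qed

lemma coord_proj_in_OP2: "k < 3 \<Longrightarrow> coord_proj k \<in> OP2"
  using less_3_cases[of k]
  by (auto simp: OP2_def hermitian3_def coord_proj_def omat_mult_def otrace_def intro!: ext)

lemma oinner_line_proj:
  assumes "oct_dot b b = 1" "oct_dot c c = 1" "oct_dot b' b' = 1" "oct_dot c' c' = 1"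
  shows "oinner (line_proj b c) (line_proj b' c') =
    (3 + 2 * (oct_dot b b' + oct_dot c c' + oct_dot (omul b (oconj c)) (omul b' (oconj c')))) / 9"
proof -
  have "oct_dot (omul c (oconj b)) (omul c' (oconj b')) = oct_dot (omul b (oconj c)) (omul b' (oconj c'))"
    using oct_dot_oconj[of "omul b (oconj c)" "omul b' (oconj c')"] by (simp add: oconj_omul)
  then show ?thesis
    by (simp add: oinner_def omat_mult_def otrace_def line_proj_def line_vec_def ore_oadd omul_oscale
        ore_oscale ore_omul oconj_omul omul_oconj_self oct_dot_oconj assms)
qed

lemma oinner_coord_proj_line_proj:
  assumes "oct_dot b b = 1" "oct_dot c c = 1" "k < 3"
  shows "oinner (coord_proj k) (line_proj b c) = 1/3" "oinner (line_proj b c) (coord_proj k) = 1/3"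
  using less_3_cases[OF \<open>k < 3\<close>]
  by (auto simp: oinner_def omat_mult_def otrace_def line_proj_def coord_proj_def line_vec_def
      ore_oadd ore_oscale omul_oconj_self assms)

lemma oinner_coord_proj:
  "k < 3 \<Longrightarrow> l < 3 \<Longrightarrow> oinner (coord_proj k) (coord_proj l) = (if k = l then 1 else 0)"
  using less_3_cases[of k] less_3_cases[of l]
  by (auto simp: oinner_def omat_mult_def otrace_def coord_proj_def ore_oadd)

section \<open>The 39 points\<close>

text \<open>Octonions with half-integral coordinates are stored as integer lists of doubled
  coordinates; int_mul_conj_eq x y z says x y^* = 2 z componentwise.\<close>

definition half_oct :: "int list \<Rightarrow> oct" where
  "half_oct x = oct_of (of_int (x!0) / 2) (of_int (x!1) / 2) (of_int (x!2) / 2) (of_int (x!3) / 2)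
     (of_int (x!4) / 2) (of_int (x!5) / 2) (of_int (x!6) / 2) (of_int (x!7) / 2)"

definition int_dot :: "int list \<Rightarrow> int list \<Rightarrow> int" where
  "int_dot x y = x!0*y!0 + x!1*y!1 + x!2*y!2 + x!3*y!3 + x!4*y!4 + x!5*y!5 + x!6*y!6 + x!7*y!7"

definition int_mul_conj_eq :: "int list \<Rightarrow> int list \<Rightarrow> int list \<Rightarrow> bool" where
  "int_mul_conj_eq x y z \<longleftrightarrow>
     (x!0 * y!0 + x!1 * y!1 + x!2 * y!2 + x!3 * y!3 + x!4 * y!4 + x!5 * y!5 + x!6 * y!6 + x!7 * y!7) = 2 * z!0 \<and>
     (- x!0 * y!1 + x!1 * y!0 - x!2 * y!3 + x!3 * y!2 - x!4 * y!5 + x!5 * y!4 + x!6 * y!7 - x!7 * y!6) = 2 * z!1 \<and>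
     (- x!0 * y!2 + x!1 * y!3 + x!2 * y!0 - x!3 * y!1 - x!4 * y!6 - x!5 * y!7 + x!6 * y!4 + x!7 * y!5) = 2 * z!2 \<and>
     (- x!0 * y!3 - x!1 * y!2 + x!2 * y!1 + x!3 * y!0 - x!4 * y!7 + x!5 * y!6 - x!6 * y!5 + x!7 * y!4) = 2 * z!3 \<and>
     (- x!0 * y!4 + x!1 * y!5 + x!2 * y!6 + x!3 * y!7 + x!4 * y!0 - x!5 * y!1 - x!6 * y!2 - x!7 * y!3) = 2 * z!4 \<and>
     (- x!0 * y!5 - x!1 * y!4 + x!2 * y!7 - x!3 * y!6 + x!4 * y!1 + x!5 * y!0 + x!6 * y!3 - x!7 * y!2) = 2 * z!5 \<and>
     (- x!0 * y!6 - x!1 * y!7 - x!2 * y!4 + x!3 * y!5 + x!4 * y!2 - x!5 * y!3 + x!6 * y!0 + x!7 * y!1) = 2 * z!6 \<and>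
     (- x!0 * y!7 + x!1 * y!6 - x!2 * y!5 - x!3 * y!4 + x!4 * y!3 + x!5 * y!2 - x!6 * y!1 + x!7 * y!0) = 2 * z!7"

lemma oct_dot_half_oct: "oct_dot (half_oct x) (half_oct y) = int_dot x y / 4"
  by (simp add: half_oct_def int_dot_def oct_of_simps field_simps)

lemma omul_oconj_half_oct:
  assumes "int_mul_conj_eq x y z"
  shows "omul (half_oct x) (oconj (half_oct y)) = half_oct z"
  using assms unfolding int_mul_conj_eq_def
  by (simp add: half_oct_def oct_of_simps field_simps flip: of_int_mult of_int_add of_int_diff)

text \<open>Row 3g + r of the tables gives b, c and b c^* for the r-th point of the g-th triple.\<close>

definition code_b :: "int list list" where "code_b = [
    [2, 0, 0, 0, 0, 0, 0, 0], [-1, -1, -1, -1, 0, 0, 0, 0], [-1, 1, 1, 1, 0, 0, 0, 0],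
    [0, -1, 0, 1, 1, 0, 0, 1], [0, 1, -1, 0, -1, 0, 1, 0], [0, 0, 1, -1, 0, 0, -1, -1],
    [0, 0, 0, 0, -1, -1, -1, 1], [0, 0, 0, 0, 0, 2, 0, 0], [0, 0, 0, 0, 1, -1, 1, -1],
    [0, 0, 0, 0, 1, -1, 1, -1], [0, 0, 0, 0, 0, 2, 0, 0], [0, 0, 0, 0, -1, -1, -1, 1],
    [0, 1, 0, -1, 1, 0, 0, 1], [0, 0, -1, 1, 0, 0, -1, -1], [0, -1, 1, 0, -1, 0, 1, 0],
    [0, 1, -1, 0, -1, 0, 1, 0], [0, -1, 0, 1, 1, 0, 0, 1], [0, 0, 1, -1, 0, 0, -1, -1],
    [2, 0, 0, 0, 0, 0, 0, 0], [-1, 1, 1, 1, 0, 0, 0, 0], [-1, -1, -1, -1, 0, 0, 0, 0],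
    [0, 0, 0, 0, 1, -1, 1, -1], [0, 0, 0, 0, -1, -1, -1, 1], [0, 0, 0, 0, 0, 2, 0, 0],
    [0, 1, 0, -1, 1, 0, 0, 1], [0, 0, -1, 1, 0, 0, -1, -1], [0, -1, 1, 0, -1, 0, 1, 0],
    [0, 0, -1, 1, 0, 0, -1, -1], [0, -1, 1, 0, -1, 0, 1, 0], [0, 1, 0, -1, 1, 0, 0, 1],
    [2, 0, 0, 0, 0, 0, 0, 0], [-1, 1, 1, 1, 0, 0, 0, 0], [-1, -1, -1, -1, 0, 0, 0, 0],
    [0, -1, 0, 1, 1, 0, 0, 1], [0, 1, -1, 0, -1, 0, 1, 0], [0, 0, 1, -1, 0, 0, -1, -1]]"

definition code_c :: "int list list" where "code_c = [
    [2, 0, 0, 0, 0, 0, 0, 0], [-1, 1, 1, 1, 0, 0, 0, 0], [-1, -1, -1, -1, 0, 0, 0, 0],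
    [0, 0, 0, 0, 0, -2, 0, 0], [0, 0, 0, 0, 1, 1, 1, -1], [0, 0, 0, 0, -1, 1, -1, 1],
    [0, -1, 1, 0, -1, 0, 1, 0], [0, 1, 0, -1, 1, 0, 0, 1], [0, 0, -1, 1, 0, 0, -1, -1],
    [0, -1, 1, 0, -1, 0, 1, 0], [0, 0, -1, 1, 0, 0, -1, -1], [0, 1, 0, -1, 1, 0, 0, 1],
    [0, -1, 0, 1, 1, 0, 0, 1], [0, 0, 1, -1, 0, 0, -1, -1], [0, 1, -1, 0, -1, 0, 1, 0],
    [0, 0, 0, 0, 0, -2, 0, 0], [0, 0, 0, 0, -1, 1, -1, 1], [0, 0, 0, 0, 1, 1, 1, -1],
    [-1, 1, 1, 1, 0, 0, 0, 0], [2, 0, 0, 0, 0, 0, 0, 0], [-1, -1, -1, -1, 0, 0, 0, 0],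
    [0, 1, 0, -1, 1, 0, 0, 1], [0, 0, -1, 1, 0, 0, -1, -1], [0, -1, 1, 0, -1, 0, 1, 0],
    [0, 1, -1, 0, -1, 0, 1, 0], [0, -1, 0, 1, 1, 0, 0, 1], [0, 0, 1, -1, 0, 0, -1, -1],
    [0, 1, -1, 0, -1, 0, 1, 0], [0, -1, 0, 1, 1, 0, 0, 1], [0, 0, 1, -1, 0, 0, -1, -1],
    [-1, -1, -1, -1, 0, 0, 0, 0], [-1, 1, 1, 1, 0, 0, 0, 0], [2, 0, 0, 0, 0, 0, 0, 0],
    [0, 0, 0, 0, 1, 1, 1, -1], [0, 0, 0, 0, -1, 1, -1, 1], [0, 0, 0, 0, 0, -2, 0, 0]]"

definition code_d :: "int list list" where "code_d = [
    [2, 0, 0, 0, 0, 0, 0, 0], [-1, 1, 1, 1, 0, 0, 0, 0], [-1, -1, -1, -1, 0, 0, 0, 0],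
    [0, 1, -1, 0, 1, 0, -1, 0], [0, 0, 1, -1, 0, 0, 1, 1], [0, -1, 0, 1, -1, 0, 0, -1],
    [0, 0, 1, -1, 0, 0, -1, -1], [0, 1, -1, 0, -1, 0, 1, 0], [0, -1, 0, 1, 1, 0, 0, 1],
    [0, 1, -1, 0, -1, 0, 1, 0], [0, 0, 1, -1, 0, 0, -1, -1], [0, -1, 0, 1, 1, 0, 0, 1],
    [0, 0, 0, 0, -1, -1, -1, 1], [0, 0, 0, 0, 0, 2, 0, 0], [0, 0, 0, 0, 1, -1, 1, -1],
    [0, -1, 0, 1, -1, 0, 0, -1], [0, 0, 1, -1, 0, 0, 1, 1], [0, 1, -1, 0, 1, 0, -1, 0],
    [-1, -1, -1, -1, 0, 0, 0, 0], [-1, 1, 1, 1, 0, 0, 0, 0], [2, 0, 0, 0, 0, 0, 0, 0],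
    [0, 0, 1, -1, 0, 0, -1, -1], [0, 1, -1, 0, -1, 0, 1, 0], [0, -1, 0, 1, 1, 0, 0, 1],
    [0, 0, 0, 0, 0, 2, 0, 0], [0, 0, 0, 0, 1, -1, 1, -1], [0, 0, 0, 0, -1, -1, -1, 1],
    [0, 0, 0, 0, -1, -1, -1, 1], [0, 0, 0, 0, 0, 2, 0, 0], [0, 0, 0, 0, 1, -1, 1, -1],
    [-1, 1, 1, 1, 0, 0, 0, 0], [2, 0, 0, 0, 0, 0, 0, 0], [-1, -1, -1, -1, 0, 0, 0, 0],
    [0, -1, 0, 1, -1, 0, 0, -1], [0, 1, -1, 0, 1, 0, -1, 0], [0, 0, 1, -1, 0, 0, 1, 1]]"

lemma code_tables_mul_conj:
  "list_all (\<lambda>i. int_mul_conj_eq (code_b!i) (code_c!i) (code_d!i)) [0..<36]"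
  by code_simp

lemma code_tables_unit:
  "list_all (\<lambda>i. int_dot (code_b!i) (code_b!i) = 4 \<and> int_dot (code_c!i) (code_c!i) = 4) [0..<36]"
  by code_simp

lemma code_tables_gram:
  "list_all (\<lambda>i. list_all (\<lambda>j. int_dot (code_b!i) (code_b!j) + int_dot (code_c!i) (code_c!j)
     + int_dot (code_d!i) (code_d!j) = (if i = j then 12 else if i div 3 = j div 3 then -6 else 0))
   [0..<36]) [0..<36]"
  by code_simp

definition code_point :: "nat \<Rightarrow> nat \<Rightarrow> omat" where
  "code_point g r = (if g < 12 then line_proj (half_oct (code_b!(3*g+r))) (half_oct (code_c!(3*g+r)))
                     else coord_proj r)"

lemma code_tables_unit_at:
  "i < 36 \<Longrightarrow> oct_dot (half_oct (code_b!i)) (half_oct (code_b!i)) = 1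
     \<and> oct_dot (half_oct (code_c!i)) (half_oct (code_c!i)) = 1"
  using code_tables_unit by (simp add: list_all_iff oct_dot_half_oct)

lemma code_tables_mul_conj_at:
  "i < 36 \<Longrightarrow> omul (half_oct (code_b!i)) (oconj (half_oct (code_c!i))) = half_oct (code_d!i)"
  using code_tables_mul_conj by (intro omul_oconj_half_oct) (simp add: list_all_iff)

lemma oinner_code_tables:
  assumes i: "i < 36" and j: "j < 36"
  shows "oinner (line_proj (half_oct (code_b!i)) (half_oct (code_c!i)))
                (line_proj (half_oct (code_b!j)) (half_oct (code_c!j)))
           = (if i = j then 1 else if i div 3 = j div 3 then 0 else 1/3)"
proof -
  have "oinner (line_proj (half_oct (code_b!i)) (half_oct (code_c!i)))
               (line_proj (half_oct (code_b!j)) (half_oct (code_c!j)))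
          = (3 + 2 * (int_dot (code_b!i) (code_b!j) + int_dot (code_c!i) (code_c!j)
                      + int_dot (code_d!i) (code_d!j)) / 4) / 9"
    using code_tables_unit_at[OF i] code_tables_unit_at[OF j]
      code_tables_mul_conj_at[OF i] code_tables_mul_conj_at[OF j]
    by (simp add: oinner_line_proj oct_dot_half_oct add_divide_distrib)
  also have "\<dots> = (if i = j then 1 else if i div 3 = j div 3 then 0 else 1/3)"
    using code_tables_gram i j by (simp add: list_all_iff)
  finally show ?thesis .
qed

lemma code_point_in_OP2: "g < 13 \<Longrightarrow> r < 3 \<Longrightarrow> code_point g r \<in> OP2"
  using code_tables_unit_at[of "3*g+r"]
  by (auto simp: code_point_def line_proj_in_OP2 coord_proj_in_OP2)

lemma oinner_code_point:
  assumes "g < 13" "r < 3" "g' < 13" "r' < 3"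
  shows "oinner (code_point g r) (code_point g' r') =
           (if g = g' \<and> r = r' then 1 else if g = g' then 0 else 1/3)"
proof -
  have "(3*g+r) div 3 = g" "(3*g'+r') div 3 = g'"
    and "3*g+r = 3*g'+r' \<longleftrightarrow> g = g' \<and> r = r'"
    using assms by presburger+
  then show ?thesis
    using assms oinner_code_tables[of "3*g+r" "3*g'+r'"]
      code_tables_unit_at[of "3*g+r"] code_tables_unit_at[of "3*g'+r'"]
    by (auto simp: code_point_def oinner_coord_proj_line_proj oinner_coord_proj)
qed

locale orthogonal_triples =
  fixes P :: "nat \<Rightarrow> nat \<Rightarrow> omat" and n :: nat
  assumes oinner_P: "\<lbrakk>g < n; r < 3; g' < n; r' < 3\<rbrakk> \<Longrightarrow>
    oinner (P g r) (P g' r') = (if g = g' \<and> r = r' then 1 else if g = g' then 0 else 1/3)"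
begin

definition triple :: "nat \<Rightarrow> omat set" where
  "triple g = P g ` {..<3}"

definition triples :: "omat set set" where
  "triples = triple ` {..<n}"

definition points :: "omat set" where
  "points = (\<lambda>(g, r). P g r) ` ({..<n} \<times> {..<3})"

lemma P_eq_iff:
  "\<lbrakk>g < n; r < 3; g' < n; r' < 3\<rbrakk> \<Longrightarrow> P g r = P g' r' \<longleftrightarrow> g = g' \<and> r = r'"
  using oinner_P[of g r g r] oinner_P[of g r g' r'] by (auto split: if_splits)

lemma finite_points: "finite points"
  by (simp add: points_def)

lemma card_points: "card points = 3 * n"
proof -
  have "inj_on (\<lambda>(g, r). P g r) ({..<n} \<times> {..<3})"
    by (auto simp: inj_on_def P_eq_iff)
  then show ?thesis
    by (simp add: points_def card_image)
qed

lemma triples_subset_Pow: "triples \<subseteq> Pow points"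
  by (auto simp: triples_def triple_def points_def)

lemma Union_triples: "\<Union>triples = points"
  by (auto simp: triples_def triple_def points_def)

lemma triple_eq_iff: "g < n \<Longrightarrow> g' < n \<Longrightarrow> triple g = triple g' \<longleftrightarrow> g = g'"
proof
  assume "g < n" "g' < n" "triple g = triple g'"
  then have "P g 0 \<in> triple g'"
    by (auto simp: triple_def)
  then show "g = g'"
    using \<open>g < n\<close> \<open>g' < n\<close> by (auto simp: triple_def P_eq_iff)
qed simp

lemma card_triples: "card triples = n"
proof -
  have "inj_on triple {..<n}"
    by (auto simp: inj_on_def triple_eq_iff)
  then show ?thesis
    by (simp add: triples_def card_image)
qed

lemma triplesE:
  assumes "t \<in> triples"
  obtains g where "g < n" "t = triple g"
  using assms by (auto simp: triples_def)

lemma card_triple: "t \<in> triples \<Longrightarrow> card t = 3"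
proof (elim triplesE)
  fix g assume "g < n" "t = triple g"
  moreover have "inj_on (P g) {..<3}"
    using \<open>g < n\<close> by (auto simp: inj_on_def P_eq_iff)
  ultimately show "card t = 3"
    by (simp add: triple_def card_image)
qed

lemma triples_disjoint: "\<lbrakk>t \<in> triples; t' \<in> triples; t \<noteq> t'\<rbrakk> \<Longrightarrow> t \<inter> t' = {}"
  by (auto simp: triples_def triple_def P_eq_iff)

lemma oinner_same_triple: "\<lbrakk>t \<in> triples; A \<in> t; B \<in> t; A \<noteq> B\<rbrakk> \<Longrightarrow> oinner A B = 0"
  by (auto simp: triples_def triple_def oinner_P)

lemma oinner_other_triples:
  assumes "t \<in> triples" "t' \<in> triples" "t \<noteq> t'" "A \<in> t" "B \<in> t'"
  shows "oinner A B = 1/3"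
proof -
  obtain g g' where "g < n" "t = triple g" "g' < n" "t' = triple g'"
    using assms(1,2) by (elim triplesE)
  moreover obtain r r' where "r < 3" "A = P g r" "r' < 3" "B = P g' r'"
    using assms(4,5) \<open>t = triple g\<close> \<open>t' = triple g'\<close> by (auto simp: triple_def)
  ultimately show ?thesis
    using \<open>t \<noteq> t'\<close> by (auto simp: oinner_P)
qed

lemma oinner_points:
  assumes "A \<in> points" "B \<in> points" "A \<noteq> B"
  shows "oinner A B = 0 \<or> oinner A B = 1/3"
proof -
  obtain g r g' r' where "g < n" "r < 3" "A = P g r" "g' < n" "r' < 3" "B = P g' r'"
    using assms(1,2) by (auto simp: points_def)
  then show ?thesis
    using \<open>A \<noteq> B\<close> by (auto simp: oinner_P)
qed

lemma min_geod_points: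
  assumes "2 \<le> n"
  shows "min_geod points = arccos (-1/3)"
proof -
  have geod_third: "geod A B = arccos (-1/3)" if "oinner A B = 1/3" for A B
  proof -
    have "2 * oinner A B - 1 = -1/3"
      using that by simp
    then show ?thesis
      by (simp add: geod_def)
  qed
  have "P 0 0 \<in> points" "P 1 0 \<in> points" "P 0 0 \<noteq> P 1 0"
    using assms by (auto simp: points_def P_eq_iff)
  moreover have "geod (P 0 0) (P 1 0) = arccos (-1/3)"
    using assms by (intro geod_third) (simp add: oinner_P)
  moreover have "arccos (-1/3) \<le> geod A B" if "A \<in> points" "B \<in> points" "A \<noteq> B" for A B
    using oinner_points[OF that] arccos_ubound[of "-1/3"] geod_third
    by (auto simp: geod_def)
  moreover have "finite {geod A B | A B. A \<in> points \<and> B \<in> points \<and> A \<noteq> B}"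
    by (rule finite_subset[where B = "(\<lambda>(A, B). geod A B) ` (points \<times> points)"])
      (auto simp: finite_points)
  ultimately show ?thesis
    unfolding min_geod_def by (intro Min_eqI) (blast | force)+
qed

end

section \<open>The linear programming bound\<close>

lemma zonalOP2_low_degrees:
  "zonalOP2 0 z = 1" "zonalOP2 1 z = 6*z + 2" "zonalOP2 2 z = 91/4*z^2 + 13*z + 1/4"
  by (simp_all add: zonalOP2_def jacobiP_def numeral_eq_Suc field_simps power2_eq_square)

text \<open>The coefficients below are the expansion of (z + 1)(z - a) in the zonal functions.\<close>

lemma tight_code_quadratic_annihilator:
  fixes a :: real
  assumes "finite C" "C \<subseteq> OP2" "cos (min_geod C) = a" "a < -3/13"
    and "real (card C) = 2 * (1 - a) / (- 2*a/3 - 2/13)"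
  shows "tight_code C"
proof -
  define fc where "fc k = (if k = 0 then - 2*a/3 - 2/13 else if k = 1 then (3/7 - a)/6 else 4/91)"
    for k :: nat
  have annihilator: "(\<Sum>k\<le>2. fc k * zonalOP2 k z) = (z + 1) * (z - a)" for z
  proof -
    have "{..2::nat} = {0, 1, 2}"
      by auto
    then show ?thesis
      by (simp add: fc_def zonalOP2_low_degrees[simplified] field_simps power2_eq_square)
  qed
  have "fc 0 > 0" "\<forall>k\<in>{1..2}. fc k \<ge> 0"
    using \<open>a < -3/13\<close> by (auto simp: fc_def)
  moreover have "\<forall>z. -1 \<le> z \<and> z \<le> cos (min_geod C) \<longrightarrow> (\<Sum>k\<le>2. fc k * zonalOP2 k z) \<le> 0"
    using \<open>cos (min_geod C) = a\<close> by (auto simp: annihilator intro: mult_nonneg_nonpos)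
  moreover have "real (card C) = (\<Sum>k\<le>2. fc k * zonalOP2 k 1) / fc 0"
    unfolding annihilator using assms(5) by (simp add: fc_def)
  ultimately show ?thesis
    unfolding tight_code_def using assms(1,2) by blast
qed

theorem theorem8p3:
  shows "\<exists>C T. tight_code C \<and> card C = 39 \<and>
     T \<subseteq> Pow C \<and> \<Union>T = C \<and> card T = 13 \<and>
     (\<forall>t\<in>T. card t = 3) \<and>
     (\<forall>t\<in>T. \<forall>t'\<in>T. t \<noteq> t' \<longrightarrow> t \<inter> t' = {}) \<and>
     (\<forall>t\<in>T. \<forall>P\<in>t. \<forall>Q\<in>t. P \<noteq> Q \<longrightarrow> oinner P Q = 0) \<and>
     (\<forall>t\<in>T. \<forall>t'\<in>T. t \<noteq> t' \<longrightarrow> (\<forall>P\<in>t. \<forall>Q\<in>t'. chordal P Q = sqrt (2/3) \<and> oinner P Q = 1/3))"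
proof -
  interpret orthogonal_triples code_point 13
    by unfold_locales (rule oinner_code_point)
  have "points \<subseteq> OP2"
    using code_point_in_OP2 by (auto simp: points_def)
  then have "tight_code points"
    by (intro tight_code_quadratic_annihilator[where a = "-1/3"])
      (simp_all add: finite_points min_geod_points card_points)
  moreover have "chordal A B = sqrt (2/3)" if "oinner A B = 1/3" for A B
    using that by (simp add: chordal_def)
  ultimately show ?thesis
    using card_points triples_subset_Pow Union_triples card_triples card_triple triples_disjoint
      oinner_same_triple oinner_other_triples
    by (intro exI[of _ points] exI[of _ triples]) auto
qed

end
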